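(* Let $\mathcal{A}$ be a one-dimensional cellular automaton which is not sensitive to initial conditions, and let $\mu$ be any complete Bernoulli measure on $Q^{\mathbb{Z}}$. Then the set $L_\mu(\mathcal{A})$ of $\mu$-persistent words of $\mathcal{A}$ is exactly the set of bricks of wall for $\mathcal{A}$.
   Context: A one-dimensional cellular automaton (CA) $\mathcal{A}$ is given by a finite alphabet $Q$, a radius $r\ge 0$ and a local rule $\delta:Q^{2r+1}\to Q$; it acts on configurations $c\in Q^{\mathbb{Z}}$ by $\mathcal{A}(c)_i=\delta(c_{i-r},\dots,c_{i+r})$. For a word $u\in Q^*$ and $i\in\mathbb{Z}$, the cylinder is $[u]_i=\{c\in Q^{\mathbb{Z}}: c_ic_{i+1}\cdots c_{i+|u|-1}=u\}$. A Bernoulli measure $\mu$ on $Q^{\mathbb{Z}}$ is given by a probability vector $(p_a)_{a\in Q}$ with $\mu([u]_i)=\prod_{a\in Q}p_a^{|u|_a}$ for all $u,i$, where $|u|_a$ is the number of occurrences of $a$ in $u$; it is complete if $p_a>0$ for all $a$; the uniform measure has $p_a=1/|Q|$. For $n\ge0$, $\mathcal{A}^n\mu$ is the measure $U\mapsto\mu(\mathcal{A}^{-n}(U))$. A word $u\in Q^*$ is vanishing for $(\mathcal{A},\mu)$ if $\lim_{n\to\infty}\mathcal{A}^n\mu([u]_0)=0$, and persistent otherwise; $L_\mu(\mathcal{A})$ denotes the set of persistent words. The $\mu$-limit set is $\Lambda_\mu(\mathcal{A})=\{c\in Q^{\mathbb{Z}}:\text{every finite subword of }c\text{ lies in }L_\mu(\mathcal{A})\}$.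 Walls: for $u\in Q^*$ let $\langle u\rangle=[u]_{-|u|/2}$ if $|u|$ is even and $\langle u\rangle=[u]_{-(|u|+1)/2}$ if $|u|$ is odd. A wall for $\mathcal{A}$ is a sequence $(w_n)_{n\ge0}$ of nonempty words over $Q$ such that (1) for every $c\in\langle w_0\rangle$ and every $n\ge1$, $\mathcal{A}^n(c)\in\langle w_n\rangle$, and (2) the sequence $(|w_n|)_{n\ge0}$ is non-increasing. The word $w_0$ is the foot of the wall. A word $w$ is a brick of the wall $(w_n)$ if there are integers $p\ge1$, $n_0\ge0$ with $w_{pn+n_0}=w$ for all $n\ge0$. A word is a brick of wall for $\mathcal{A}$ if it is a brick of some wall for $\mathcal{A}$. Sensitivity: equip $Q^{\mathbb{Z}}$ with the Cantor metric $d(c,c')=2^{-\min\{|i|:c_i\neq c'_i\}}$. $\mathcal{A}$ is sensitive to initial conditions if there is $\varepsilon>0$ such that for every $c$ and every $\eta>0$ there exist $c'$ with $d(c,c')<\eta$ and $n\ge0$ with $d(\mathcal{A}^n(c),\mathcal{A}^n(c'))\ge\varepsilon$. *)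

theory Defs
  imports "HOL-Probability.Probability"
begin

definition ca_global :: "nat \<Rightarrow> ('q list \<Rightarrow> 'q) \<Rightarrow> (int \<Rightarrow> 'q) \<Rightarrow> (int \<Rightarrow> 'q)" where
  "ca_global r \<delta> c = (\<lambda>i. \<delta> (map (\<lambda>j. c (i + j)) [- int r..int r]))"

definition cyl :: "'q list \<Rightarrow> int \<Rightarrow> (int \<Rightarrow> 'q) set" where
  "cyl u i = {c. \<forall>k<length u. c (i + int k) = u ! k}"

definition centered_cyl :: "'q list \<Rightarrow> (int \<Rightarrow> 'q) set" where
  "centered_cyl u = (if even (length u) then cyl u (- (int (length u) div 2))
                     else cyl u (- ((int (length u) + 1) div 2)))"

definition bernoulli :: "'q pmf \<Rightarrow> (int \<Rightarrow> 'q) measure" where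
  "bernoulli p = (\<Pi>\<^sub>M i\<in>(UNIV::int set). measure_pmf p)"

definition complete_bernoulli :: "'q pmf \<Rightarrow> bool" where
  "complete_bernoulli p \<longleftrightarrow> (\<forall>a. pmf p a > 0)"

text \<open>(A^n mu)([u]_0) = mu(A^{-n}([u]_0)).\<close>
definition push_cyl :: "nat \<Rightarrow> ('q list \<Rightarrow> 'q) \<Rightarrow> 'q pmf \<Rightarrow> nat \<Rightarrow> 'q list \<Rightarrow> real" where
  "push_cyl r \<delta> p n u = measure (bernoulli p) (((ca_global r \<delta>) ^^ n) -` cyl u 0)"

definition persistent :: "nat \<Rightarrow> ('q list \<Rightarrow> 'q) \<Rightarrow> 'q pmf \<Rightarrow> 'q list \<Rightarrow> bool" where
  "persistent r \<delta> p u \<longleftrightarrow> \<not> ((\<lambda>n. push_cyl r \<delta> p n u) \<longlonglongrightarrow> 0)"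

definition persistent_words :: "nat \<Rightarrow> ('q list \<Rightarrow> 'q) \<Rightarrow> 'q pmf \<Rightarrow> 'q list set" where
  "persistent_words r \<delta> p = {u. persistent r \<delta> p u}"

definition is_wall :: "nat \<Rightarrow> ('q list \<Rightarrow> 'q) \<Rightarrow> (nat \<Rightarrow> 'q list) \<Rightarrow> bool" where
  "is_wall r \<delta> w \<longleftrightarrow>
     (\<forall>n. w n \<noteq> []) \<and>
     (\<forall>c\<in>centered_cyl (w 0). \<forall>n\<ge>1. ((ca_global r \<delta>) ^^ n) c \<in> centered_cyl (w n)) \<and>
     (\<forall>n. length (w (Suc n)) \<le> length (w n))"

definition is_brick :: "(nat \<Rightarrow> 'q list) \<Rightarrow> 'q list \<Rightarrow> bool" where
  "is_brick w v \<longleftrightarrow> (\<exists>p n0. p \<ge> 1 \<and> (\<forall>n. w (p * n + n0) = v))"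

definition bricks_of_walls :: "nat \<Rightarrow> ('q list \<Rightarrow> 'q) \<Rightarrow> 'q list set" where
  "bricks_of_walls r \<delta> = {v. \<exists>w. is_wall r \<delta> w \<and> is_brick w v}"

definition cantor_dist :: "(int \<Rightarrow> 'q) \<Rightarrow> (int \<Rightarrow> 'q) \<Rightarrow> real" where
  "cantor_dist c c' = (if c = c' then 0
     else (1/2) ^ (LEAST k::nat. \<exists>i. \<bar>i\<bar> = int k \<and> c i \<noteq> c' i))"

definition sensitive :: "nat \<Rightarrow> ('q list \<Rightarrow> 'q) \<Rightarrow> bool" where
  "sensitive r \<delta> \<longleftrightarrow> (\<exists>\<epsilon>>0. \<forall>c. \<forall>\<eta>>0. \<exists>c' n.
     cantor_dist c c' < \<eta> \<and>
     cantor_dist (((ca_global r \<delta>) ^^ n) c) (((ca_global r \<delta>) ^^ n) c') \<ge> \<epsilon>)"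

end

theory Submission
  imports Defs
begin

text \<open>
  Bricks are persistent: along the subsequence of times where a wall shows its brick, the
  cylinder of the foot (suitably placed) is mapped into the cylinder of the brick, so the brick
  keeps a fixed positive measure infinitely often.

  Conversely, a CA without sensitivity has a blocking word \<open>b\<close>: all configurations containing
  \<open>b\<close> at a given place agree forever on a window of \<open>r\<close> cells inside it. Between two
  occurrences of \<open>b\<close> the evolution is then a function of the cells between the occurrences.
  A persistent word \<open>u\<close> has measure at least \<open>\<epsilon>\<close> at infinitely many times, and since \<open>b\<close>
  occurs on both sides of \<open>u\<close> within a fixed distance \<open>R\<close> with probability \<open>> 1 - \<epsilon>\<close>,
  infinitely often some preimage of \<open>[u]\<^sub>0\<close> has the cells of \<open>u\<close> determined by its cells in
  \<open>[-R, R]\<close>. Repeating those cells periodically gives a configuration with an eventually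
  periodic orbit; its restriction to a long centred window, followed by its traces on the
  cells of \<open>u\<close>, is a wall of which \<open>u\<close> is a brick.
\<close>

section \<open>Cylinders under the Bernoulli measure\<close>

lemma space_bernoulli [simp]: "space (bernoulli p) = UNIV"
  by (simp add: bernoulli_def space_PiM)

lemma prob_space_bernoulli: "prob_space (bernoulli p)"
  unfolding bernoulli_def by (auto intro!: prob_space_PiM prob_space_measure_pmf)

lemma measurable_neighbourhood:
  "(\<lambda>c::int \<Rightarrow> 'q::countable. map (\<lambda>j. c (i + j)) js)
     \<in> measurable (PiM UNIV (\<lambda>_. count_space UNIV)) (count_space UNIV)"
proof (induction js)
  case (Cons j js)
  have tail: "(\<lambda>c::int \<Rightarrow> 'q. a # map (\<lambda>j. c (i + j)) js)
      \<in> measurable (PiM UNIV (\<lambda>_. count_space UNIV)) (count_space UNIV)" for a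
    by (rule measurable_compose[OF Cons.IH]) simp
  have head: "(\<lambda>c::int \<Rightarrow> 'q. c (i + j))
      \<in> measurable (PiM UNIV (\<lambda>_. count_space UNIV)) (count_space UNIV)"
    by measurable
  from measurable_compose_countable[OF tail head] show ?case by simp
qed simp

lemma measurable_ca_global:
  "ca_global r (\<delta> :: 'q::finite list \<Rightarrow> 'q) \<in> measurable (bernoulli p) (bernoulli p)"
  unfolding bernoulli_def ca_global_def
proof (rule measurable_PiM_single')
  fix i :: int
  have "sets (Pi\<^sub>M UNIV (\<lambda>_. measure_pmf p)) = sets (Pi\<^sub>M UNIV (\<lambda>_::int. count_space (UNIV :: 'q set)))"
    by (rule sets_PiM_cong) simp_all
  moreover have "(\<lambda>c. \<delta> (map (\<lambda>j. c (i + j)) [- int r..int r]))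
      \<in> measurable (Pi\<^sub>M UNIV (\<lambda>_. count_space UNIV)) (count_space UNIV)"
    by (rule measurable_compose[OF measurable_neighbourhood]) simp
  ultimately show "(\<lambda>c. \<delta> (map (\<lambda>j. c (i + j)) [- int r..int r]))
      \<in> measurable (Pi\<^sub>M UNIV (\<lambda>_. measure_pmf p)) (measure_pmf p)"
    by (simp cong: measurable_cong_sets)
qed (simp add: space_PiM)

lemma measurable_ca_global_funpow:
  "(ca_global r (\<delta> :: 'q::finite list \<Rightarrow> 'q) ^^ n) \<in> measurable (bernoulli p) (bernoulli p)"
proof (induction n)
  case (Suc n)
  show ?case
    using measurable_comp[OF Suc measurable_ca_global] by (simp add: comp_def)
qed simp

lemma cyl_in_sets: "cyl u i \<in> sets (bernoulli p)"
proof (cases "u = []")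
  case False
  have "cyl u i = (\<Inter>k\<in>{..<length u}. {c \<in> space (bernoulli p). c (i + int k) = u ! k})"
    by (auto simp: cyl_def)
  also have "\<dots> \<in> sets (bernoulli p)"
    unfolding bernoulli_def using False by (intro sets.finite_INT) auto
  finally show ?thesis .
next
  case True
  then have "cyl u i = space (bernoulli p)" by (simp add: cyl_def)
  then show ?thesis by (metis sets.top)
qed

lemma preimage_cyl_in_sets:
  "(ca_global r (\<delta> :: 'q::finite list \<Rightarrow> 'q) ^^ n) -` cyl u a \<in> sets (bernoulli p)"
  using measurable_sets[OF measurable_ca_global_funpow cyl_in_sets] by simp

lemma emeasure_cyl: "emeasure (bernoulli p) (cyl u a) = ennreal (\<Prod>k<length u. pmf p (u ! k))"
proof -
  let ?J = "(\<lambda>k. a + int k) ` {..<length u}"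
  let ?A = "\<lambda>i. {u ! nat (i - a)}"
  have "cyl u a = prod_emb UNIV (\<lambda>_. measure_pmf p) ?J (Pi\<^sub>E ?J ?A)"
    by (auto simp: cyl_def prod_emb_def space_PiM PiE_iff)
  then have "emeasure (bernoulli p) (cyl u a) = (\<Prod>i\<in>?J. emeasure (measure_pmf p) (?A i))"
    unfolding bernoulli_def by (simp add: emeasure_PiM_emb prob_space_measure_pmf)
  also have "\<dots> = (\<Prod>k<length u. emeasure (measure_pmf p) (?A (a + int k)))"
    by (subst prod.reindex) (auto simp: inj_on_def)
  also have "\<dots> = (\<Prod>k<length u. ennreal (pmf p (u ! k)))"
    by (simp add: emeasure_pmf_single)
  also have "\<dots> = ennreal (\<Prod>k<length u. pmf p (u ! k))"
    by (simp add: prod_ennreal)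
  finally show ?thesis .
qed

lemma measure_cyl: "measure (bernoulli p) (cyl u a) = (\<Prod>k<length u. pmf p (u ! k))"
  by (rule measure_eq_emeasure_eq_ennreal) (auto simp: emeasure_cyl prod_nonneg)

lemma measure_cyl_pos:
  assumes "complete_bernoulli p"
  shows "measure (bernoulli p) (cyl u a) > 0"
  using assms by (auto simp: measure_cyl complete_bernoulli_def intro!: prod_pos)

lemma indep_vars_coordinates:
  "prob_space.indep_vars (bernoulli p) (\<lambda>_. measure_pmf p) (\<lambda>i c. c i) UNIV"
proof -
  interpret P: prob_space "bernoulli p" by (rule prob_space_bernoulli)
  interpret PP: product_prob_space "\<lambda>_::int. measure_pmf p" UNIV
    by (simp add: product_prob_spaceI prob_space_measure_pmf)
  have coordinate: "(\<lambda>c. c i) \<in> measurable (bernoulli p) (measure_pmf p)" for i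
    unfolding bernoulli_def by (rule measurable_component_singleton) simp
  have "distr (bernoulli p) (measure_pmf p) (\<lambda>c. c i) = measure_pmf p" for i
    unfolding bernoulli_def by (rule PP.PiM_component) simp
  moreover have "(\<lambda>c::int \<Rightarrow> 'a. \<lambda>i\<in>UNIV. c i) = (\<lambda>c. c)"
    by (auto simp: restrict_def)
  ultimately show ?thesis
    by (subst P.indep_vars_iff_distr_eq_PiM[OF _ coordinate]) (simp_all add: bernoulli_def)
qed

lemma measure_avoiding_disjoint_cylinders:
  assumes disjoint: "disjoint_family_on (\<lambda>j. {s j..<s j + int (length b)}) {..<t}"
  shows "measure (bernoulli p) {x. \<forall>j<t. x \<notin> cyl b (s j)}
    = (1 - measure (bernoulli p) (cyl b 0)) ^ t"
proof -
  interpret prob_space "bernoulli p" by (rule prob_space_bernoulli)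
  define K where "K j = {s j..<s j + int (length b)}" for j
  define M where "M j = Pi\<^sub>M (K j) (\<lambda>_. measure_pmf p)" for j
  define avoids where "avoids j g \<longleftrightarrow> (\<exists>k<length b. g (s j + int k) \<noteq> b ! k)" for j g
  have "indep_vars M (\<lambda>j c. restrict (\<lambda>i. c i) (K j)) {..<t}"
    unfolding M_def using indep_vars_restrict[OF indep_vars_coordinates] disjoint
    by (simp add: K_def)
  moreover have "{g \<in> space (M j). avoids j g} \<in> sets (M j)" for j
  proof -
    have "{g \<in> space (M j). avoids j g} = (\<Union>k<length b. {g \<in> space (M j). g (s j + int k) \<noteq> b ! k})"
      unfolding avoids_def by blast
    also have "\<dots> \<in> sets (M j)"
    proof (rule sets.finite_UN)
      fix k assume "k \<in> {..<length b}"
      then have "s j + int k \<in> K j" by (simp add: K_def)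
      then show "{g \<in> space (M j). g (s j + int k) \<noteq> b ! k} \<in> sets (M j)"
        unfolding M_def by measurable
    qed simp
    finally show ?thesis .
  qed
  ultimately have indep: "indep_events (\<lambda>j. {c \<in> space (bernoulli p). avoids j (restrict (\<lambda>i. c i) (K j))}) {..<t}"
    by (rule indep_eventsI_indep_vars)
  have avoids_eq: "{c \<in> space (bernoulli p). avoids j (restrict (\<lambda>i. c i) (K j))} = space (bernoulli p) - cyl b (s j)" for j
    by (auto simp: avoids_def K_def cyl_def)
  have "{x. \<forall>j<t. x \<notin> cyl b (s j)} = (\<Inter>j<t. space (bernoulli p) - cyl b (s j))"
    by auto
  also have "prob \<dots> = (\<Prod>j<t. prob (space (bernoulli p) - cyl b (s j)))"
  proof (cases "t = 0")
    case False
    then show ?thesis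
      using indep unfolding avoids_eq indep_events_def by (auto dest!: spec[of _ "{..<t}"])
  qed (use prob_space in simp)
  also have "\<dots> = (\<Prod>j<t. 1 - prob (cyl b 0))"
  proof (rule prod.cong[OF refl])
    fix j
    have "prob (space (bernoulli p) - cyl b (s j)) = 1 - prob (cyl b (s j))"
      by (rule prob_compl[OF cyl_in_sets])
    then show "prob (space (bernoulli p) - cyl b (s j)) = 1 - prob (cyl b 0)"
      by (simp only: measure_cyl)
  qed
  finally show ?thesis by simp
qed

lemma disjoint_family_on_consecutive_blocks:
  "disjoint_family_on (\<lambda>j::nat. {a + int j * int m..<a + int j * int m + int m}) A"
proof -
  have "{a + int j * int m..<a + int j * int m + int m} \<inter> {a + int j' * int m..<a + int j' * int m + int m} = {}"
    if "j < j'" for j j'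
  proof -
    have "int j * int m + int m \<le> int j' * int m"
      using mult_le_mono1[of "Suc j" j' m] that by (simp add: of_nat_mult[symmetric] del: of_nat_mult)
    then show ?thesis by auto
  qed
  then show ?thesis
    unfolding disjoint_family_on_def by (metis Int_commute nat_neq_iff)
qed

lemma (in finite_measure) exists_outside_two_small_sets:
  assumes "\<epsilon> \<le> measure M S" and "A \<in> sets M" "B \<in> sets M"
    and "measure M A < \<epsilon> / 2" "measure M B < \<epsilon> / 2"
  shows "\<exists>x\<in>S. x \<notin> A \<and> x \<notin> B"
proof (rule ccontr)
  assume "\<not> (\<exists>x\<in>S. x \<notin> A \<and> x \<notin> B)"
  then have "S \<subseteq> A \<union> B" by blast
  then have "measure M S \<le> measure M (A \<union> B)"
    by (rule finite_measure_mono) (intro sets.Un assms(2,3))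
  also have "\<dots> \<le> measure M A + measure M B"
    using assms(2,3) by (rule measure_Un_le)
  finally show False using assms(1,4,5) by linarith
qed

text \<open>Slots of length \<open>|b|\<close> that do not overlap are independent, so \<open>b\<close> misses \<open>t\<close> such slots
  on one side with probability \<open>(1 - q)\<^sup>t\<close>, \<open>q\<close> the measure of \<open>[b]\<^sub>0\<close>; this is below
  \<open>\<epsilon>/2\<close> for large \<open>t\<close>.\<close>

lemma occurrences_on_both_sides:
  assumes q: "measure (bernoulli p) (cyl b 0) > 0" and "\<epsilon> > 0"
  obtains R where "\<And>S. \<epsilon> \<le> measure (bernoulli p) S \<Longrightarrow>
    \<exists>x\<in>S. \<exists>tL tR. x \<in> cyl b tL \<and> x \<in> cyl b tR \<and>
      - R \<le> tL \<and> tL + int (length b) \<le> 0 \<and> int l \<le> tR \<and> tR + int (length b) \<le> R"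
proof -
  interpret prob_space "bernoulli p" by (rule prob_space_bernoulli)
  define m where "m = length b"
  obtain t where t: "(1 - prob (cyl b 0)) ^ t < \<epsilon> / 2"
    using real_arch_pow_inv[of "\<epsilon> / 2" "1 - prob (cyl b 0)"] q \<open>\<epsilon> > 0\<close> by auto
  define slot where "slot a j = a + int j * int m" for a j
  define avoid where "avoid a = {x. \<forall>j<t. x \<notin> cyl b (slot a j)}" for a
  have avoid_sets: "avoid a \<in> sets (bernoulli p)" for a
  proof -
    have "avoid a = space (bernoulli p) - (\<Union>j<t. cyl b (slot a j))"
      by (auto simp: avoid_def)
    also have "\<dots> \<in> sets (bernoulli p)"
      by (intro sets.Diff sets.top sets.finite_UN cyl_in_sets) auto
    finally show ?thesis .
  qed
  have avoid_small: "prob (avoid a) < \<epsilon> / 2" for a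
  proof -
    have "prob (avoid a) = (1 - prob (cyl b 0)) ^ t"
      unfolding avoid_def slot_def m_def
      by (rule measure_avoiding_disjoint_cylinders[OF disjoint_family_on_consecutive_blocks])
    with t show ?thesis by simp
  qed
  define R where "R = int l + int t * int m"
  show ?thesis
  proof (rule that)
    fix S assume "\<epsilon> \<le> prob S"
    then have "\<exists>x\<in>S. x \<notin> avoid (- int t * int m) \<and> x \<notin> avoid (int l)"
      by (rule exists_outside_two_small_sets[OF _ avoid_sets avoid_sets avoid_small avoid_small])
    then obtain x jL jR where "x \<in> S" "jL < t" "jR < t"
      and "x \<in> cyl b (slot (- int t * int m) jL)" "x \<in> cyl b (slot (int l) jR)"
      by (auto simp: avoid_def)
    have "int jL * int m + int m \<le> int t * int m" "int jR * int m + int m \<le> int t * int m"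
      using mult_right_mono[of "int (Suc jL)" "int t" "int m"] mult_right_mono[of "int (Suc jR)" "int t" "int m"]
        \<open>jL < t\<close> \<open>jR < t\<close> by (simp_all add: algebra_simps)
    moreover have "0 \<le> int jL * int m" "0 \<le> int jR * int m" by simp_all
    ultimately have "- R \<le> slot (- int t * int m) jL" "slot (- int t * int m) jL + int m \<le> 0"
      "int l \<le> slot (int l) jR" "slot (int l) jR + int m \<le> R"
      unfolding slot_def R_def mult_minus_left by linarith+
    with \<open>x \<in> S\<close> \<open>x \<in> cyl b (slot (- int t * int m) jL)\<close> \<open>x \<in> cyl b (slot (int l) jR)\<close>
    show "\<exists>x\<in>S. \<exists>tL tR. x \<in> cyl b tL \<and> x \<in> cyl b tR \<and>
      - R \<le> tL \<and> tL + int (length b) \<le> 0 \<and> int l \<le> tR \<and> tR + int (length b) \<le> R"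
      unfolding m_def by blast
  qed
qed

section \<open>Shifts, windows and spatially periodic configurations\<close>

lemma ca_global_local:
  assumes "\<And>j. \<bar>j\<bar> \<le> int r \<Longrightarrow> x (i + j) = y (i + j)"
  shows "ca_global r \<delta> x i = ca_global r \<delta> y i"
  unfolding ca_global_def using assms by (auto intro!: arg_cong[where f = \<delta>])

lemma ca_global_shift: "ca_global r \<delta> (\<lambda>i. x (i + e)) = (\<lambda>i. ca_global r \<delta> x (i + e))"
  unfolding ca_global_def by (simp add: ac_simps)

lemma funpow_ca_global_shift:
  "(ca_global r \<delta> ^^ n) (\<lambda>i. x (i + e)) = (\<lambda>i. (ca_global r \<delta> ^^ n) x (i + e))"
  by (induction n) (simp_all add: ca_global_shift)

lemma cyl_shift: "(\<lambda>i. x (i + e)) \<in> cyl u a \<longleftrightarrow> x \<in> cyl u (a + e)"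
  by (simp add: cyl_def ac_simps)

definition window :: "(int \<Rightarrow> 'q) \<Rightarrow> int \<Rightarrow> nat \<Rightarrow> 'q list" where
  "window x a n = map (\<lambda>k. x (a + int k)) [0..<n]"

lemma length_window [simp]: "length (window x a n) = n"
  by (simp add: window_def)

lemma window_eq_Nil_iff [simp]: "window x a n = [] \<longleftrightarrow> n = 0"
  by (simp add: window_def)

lemma nth_window [simp]: "k < n \<Longrightarrow> window x a n ! k = x (a + int k)"
  by (simp add: window_def)

lemma cyl_window_iff: "y \<in> cyl (window x a n) a \<longleftrightarrow> (\<forall>i\<in>{a..<a + int n}. y i = x i)"
proof -
  have "(\<forall>k<n. y (a + int k) = x (a + int k)) \<longleftrightarrow> (\<forall>i\<in>{a..<a + int n}. y i = x i)"
  proof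
    assume agree: "\<forall>k<n. y (a + int k) = x (a + int k)"
    show "\<forall>i\<in>{a..<a + int n}. y i = x i"
    proof
      fix i assume "i \<in> {a..<a + int n}"
      then have "nat (i - a) < n" "a + int (nat (i - a)) = i" by auto
      then show "y i = x i" using agree by metis
    qed
  qed auto
  then show ?thesis
    by (simp add: cyl_def window_def)
qed

lemma window_eq_iff_cyl: "window x a (length u) = u \<longleftrightarrow> x \<in> cyl u a"
  unfolding cyl_def list_eq_iff_nth_eq by auto

lemma ca_global_periodic:
  assumes "\<And>i. x (i + M) = x i"
  shows "ca_global r \<delta> x (i + M) = ca_global r \<delta> x i"
proof -
  have "ca_global r \<delta> x (i + M) = ca_global r \<delta> (\<lambda>j. x (j + M)) i"
    by (simp add: ca_global_shift)
  also have "\<dots> = ca_global r \<delta> x i"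
    using assms by simp
  finally show ?thesis .
qed

lemma periodic_shift_mult:
  fixes x :: "int \<Rightarrow> 'q"
  assumes "\<And>i. x (i + M) = x i"
  shows "x (i + k * M) = x i"
proof (induction k rule: int_induct[where k = 0])
  case (step1 k)
  then show ?case using assms[of "i + k * M"] by (simp add: algebra_simps)
next
  case (step2 k)
  then show ?case using assms[of "i + (k - 1) * M"] by (simp add: algebra_simps)
qed simp

lemma finite_periodic_configurations:
  assumes "M > 0"
  shows "finite {x :: int \<Rightarrow> 'q::finite. \<forall>i. x (i + M) = x i}"
proof (rule finite_imageD)
  let ?P = "{x :: int \<Rightarrow> 'q. \<forall>i. x (i + M) = x i}"
  show "finite ((\<lambda>x. window x 0 (nat M)) ` ?P)"
    by (rule finite_subset[OF _ finite_lists_length_eq[of "UNIV :: 'q set" "nat M", simplified]]) auto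
  have recover: "x i = window x 0 (nat M) ! nat (i mod M)" if "x \<in> ?P" for x i
  proof -
    have "x i = x (i mod M + (i div M) * M)" by simp
    also have "\<dots> = x (i mod M)" using that by (intro periodic_shift_mult) auto
    finally show ?thesis using assms by (simp add: nat_less_iff)
  qed
  show "inj_on (\<lambda>x. window x 0 (nat M)) ?P"
  proof (rule inj_onI)
    fix x y assume "x \<in> ?P" "y \<in> ?P" "window x 0 (nat M) = window y 0 (nat M)"
    then have "x i = y i" for i using recover[of x i] recover[of y i] by simp
    then show "x = y" by (rule ext)
  qed
qed

lemma periodic_extension:
  assumes "0 < L"
  obtains y :: "int \<Rightarrow> 'q" where "\<And>i. y (i + L) = y i" "\<And>i. i \<in> {a..<a + L} \<Longrightarrow> y i = x i"
proof
  show "(\<lambda>i. x (a + (i - a) mod L)) (i + L) = (\<lambda>i. x (a + (i - a) mod L)) i" for i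
    using mod_add_self2[of "i - a" L] by (simp add: algebra_simps)
  show "(\<lambda>i. x (a + (i - a) mod L)) i = x i" if "i \<in> {a..<a + L}" for i
    using that by (simp add: mod_pos_pos_trivial)
qed

lemma funpow_eventually_periodic:
  assumes "finite F" and closed: "\<And>z. z \<in> F \<Longrightarrow> f z \<in> F" and "x \<in> F"
  obtains P where "P \<ge> 1" "\<And>m j. card F \<le> m \<Longrightarrow> (f ^^ (m + P * j)) x = (f ^^ m) x"
proof -
  have orbit: "(f ^^ i) x \<in> F" for i by (induction i) (auto simp: \<open>x \<in> F\<close> closed)
  have "\<not> inj_on (\<lambda>i. (f ^^ i) x) {..card F}"
  proof
    assume "inj_on (\<lambda>i. (f ^^ i) x) {..card F}"
    then have "card {..card F} \<le> card F"
      using orbit by (intro card_inj_on_le[OF _ _ \<open>finite F\<close>]) auto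
    then show False by simp
  qed
  then obtain a b where "a < b" "b \<le> card F" and repeat: "(f ^^ a) x = (f ^^ b) x"
    unfolding inj_on_def by (metis atMost_iff linorder_neqE_nat)
  have step: "(f ^^ (m + (b - a))) x = (f ^^ m) x" if "a \<le> m" for m
  proof -
    have "m + (b - a) = (m - a) + b" using that \<open>a < b\<close> by simp
    then have "(f ^^ (m + (b - a))) x = (f ^^ (m - a)) ((f ^^ b) x)"
      by (simp add: funpow_add)
    also have "\<dots> = (f ^^ (m - a + a)) x"
      by (simp add: funpow_add repeat)
    also have "\<dots> = (f ^^ m) x"
      using that by simp
    finally show ?thesis .
  qed
  show ?thesis
  proof (rule that)
    show "1 \<le> b - a" using \<open>a < b\<close> by simp
    fix m j assume "card F \<le> m"
    show "(f ^^ (m + (b - a) * j)) x = (f ^^ m) x"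
    proof (induction j)
      case (Suc j)
      have "a \<le> m + (b - a) * j" using \<open>card F \<le> m\<close> \<open>a < b\<close> \<open>b \<le> card F\<close> by simp
      then have "(f ^^ (m + (b - a) * j + (b - a))) x = (f ^^ m) x"
        using Suc.IH by (simp add: step)
      then show ?case by (simp add: ac_simps)
    qed simp
  qed
qed

definition centered_start :: "nat \<Rightarrow> int" where
  "centered_start n = (if even n then - (int n div 2) else - ((int n + 1) div 2))"

lemma centered_cyl_eq: "centered_cyl u = cyl u (centered_start (length u))"
  by (simp add: centered_cyl_def centered_start_def)

lemma centered_start_even: "centered_start (2 * k) = - int k"
  by (simp add: centered_start_def)

section \<open>Determined windows and blocking words\<close>

definition determines :: "nat \<Rightarrow> ('q list \<Rightarrow> 'q) \<Rightarrow> (int \<Rightarrow> 'q) \<Rightarrow> int set \<Rightarrow> int set \<Rightarrow> bool" where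
  "determines r \<delta> x I J \<longleftrightarrow> (\<forall>y. (\<forall>i\<in>I. y i = x i) \<longrightarrow>
     (\<forall>n. \<forall>j\<in>J. (ca_global r \<delta> ^^ n) y j = (ca_global r \<delta> ^^ n) x j))"

lemma determinesD:
  "determines r \<delta> x I J \<Longrightarrow> (\<And>i. i \<in> I \<Longrightarrow> y i = x i) \<Longrightarrow> j \<in> J
    \<Longrightarrow> (ca_global r \<delta> ^^ n) y j = (ca_global r \<delta> ^^ n) x j"
  unfolding determines_def by blast

lemma determines_mono:
  "determines r \<delta> x I J \<Longrightarrow> I \<subseteq> I' \<Longrightarrow> J' \<subseteq> J \<Longrightarrow> determines r \<delta> x I' J'"
  unfolding determines_def by blast

lemma determines_agreeing:
  assumes "determines r \<delta> x I J" and "\<And>i. i \<in> I \<Longrightarrow> y i = x i"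
  shows "determines r \<delta> y I J"
  unfolding determines_def
proof (intro allI impI ballI)
  fix z n j assume "\<forall>i\<in>I. z i = y i" and "j \<in> J"
  then have "(ca_global r \<delta> ^^ n) z j = (ca_global r \<delta> ^^ n) x j"
    and "(ca_global r \<delta> ^^ n) y j = (ca_global r \<delta> ^^ n) x j"
    using assms by (auto intro: determinesD)
  then show "(ca_global r \<delta> ^^ n) z j = (ca_global r \<delta> ^^ n) y j" by simp
qed

lemma determines_shift:
  assumes "determines r \<delta> (\<lambda>i. x (i + e)) I J"
  shows "determines r \<delta> x ((+) e ` I) ((+) e ` J)"
  unfolding determines_def
proof (intro allI impI ballI)
  fix y n j
  assume agree: "\<forall>i\<in>(+) e ` I. y i = x i" and "j \<in> (+) e ` J"
  then obtain j' where "j' \<in> J" "j = e + j'" by blast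
  have "(ca_global r \<delta> ^^ n) (\<lambda>i. y (i + e)) j' = (ca_global r \<delta> ^^ n) (\<lambda>i. x (i + e)) j'"
    using agree by (intro determinesD[OF assms _ \<open>j' \<in> J\<close>]) (auto simp: add.commute)
  then show "(ca_global r \<delta> ^^ n) y j = (ca_global r \<delta> ^^ n) x j"
    by (simp add: funpow_ca_global_shift \<open>j = e + j'\<close> add.commute)
qed

lemma determines_between:
  assumes left: "determines r \<delta> x I {a..<a + int r}"
    and right: "determines r \<delta> x I {b..<b + int r}"
    and "a \<le> b" and between: "{a..<b + int r} \<subseteq> I"
  shows "determines r \<delta> x I {a..<b + int r}"
  unfolding determines_def
proof (intro allI impI)
  fix y n
  assume agree: "\<forall>i\<in>I. y i = x i"
  show "\<forall>j\<in>{a..<b + int r}. (ca_global r \<delta> ^^ n) y j = (ca_global r \<delta> ^^ n) x j"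
  proof (induction n)
    case 0
    then show ?case using agree between by auto
  next
    case (Suc n)
    show ?case
    proof
      fix j assume j: "j \<in> {a..<b + int r}"
      consider "j < a + int r" | "b \<le> j" | "a + int r \<le> j" "j < b" by linarith
      then show "(ca_global r \<delta> ^^ Suc n) y j = (ca_global r \<delta> ^^ Suc n) x j"
      proof cases
        case 1
        with j show ?thesis using agree by (intro determinesD[OF left]) auto
      next
        case 2
        with j show ?thesis using agree by (intro determinesD[OF right]) auto
      next
        case 3
        then have "(ca_global r \<delta> ^^ n) y (j + k) = (ca_global r \<delta> ^^ n) x (j + k)"
          if "\<bar>k\<bar> \<le> int r" for k
        proof -
          have "j + k \<in> {a..<b + int r}" using that 3 by (auto simp: abs_le_iff)
          then show ?thesis by (rule Suc.IH[rule_format])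
        qed
        then show ?thesis unfolding funpow.simps(2) comp_def by (rule ca_global_local)
      qed
    qed
  qed
qed

text \<open>A window of width \<open>r\<close> on which all configurations containing \<open>b\<close> agree forever already
  isolates the two sides of an occurrence: a cell next to the window sees into it, but not
  beyond it.\<close>

definition blocking_word :: "nat \<Rightarrow> ('q list \<Rightarrow> 'q) \<Rightarrow> 'q list \<Rightarrow> bool" where
  "blocking_word r \<delta> b \<longleftrightarrow> (\<exists>d. d + r \<le> length b \<and>
     (\<forall>x\<in>cyl b 0. determines r \<delta> x {0..<int (length b)} {int d..<int d + int r}))"

lemma determines_between_blocking_words:
  assumes "blocking_word r \<delta> b" and "x \<in> cyl b tL" "x \<in> cyl b tR" "tL \<le> tR"
  shows "determines r \<delta> x {tL..<tR + int (length b)} {tL + int (length b)..<tR}"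
proof -
  obtain d where d: "d + r \<le> length b"
    and det: "\<And>y. y \<in> cyl b 0 \<Longrightarrow> determines r \<delta> y {0..<int (length b)} {int d..<int d + int r}"
    using assms(1) unfolding blocking_word_def by blast
  have window: "determines r \<delta> x {tL..<tR + int (length b)} {t + int d..<t + int d + int r}"
    if "x \<in> cyl b t" "tL \<le> t" "t \<le> tR" for t
  proof -
    have "(\<lambda>i. x (i + t)) \<in> cyl b 0" using that by (simp add: cyl_shift)
    then have "determines r \<delta> x ((+) t ` {0..<int (length b)}) ((+) t ` {int d..<int d + int r})"
      by (intro determines_shift det)
    then show ?thesis
      by (rule determines_mono) (use that in auto)
  qed
  have "determines r \<delta> x {tL..<tR + int (length b)} {tL + int d..<tL + int d + int r}"
    by (rule window) (use assms in auto)
  moreover have "determines r \<delta> x {tL..<tR + int (length b)} {tR + int d..<tR + int d + int r}"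
    by (rule window) (use assms in auto)
  ultimately have "determines r \<delta> x {tL..<tR + int (length b)} {tL + int d..<tR + int d + int r}"
    by (rule determines_between) (use d \<open>tL \<le> tR\<close> in auto)
  then show ?thesis
    by (rule determines_mono) (use d in auto)
qed

lemma cantor_dist_le_if_agree:
  assumes "\<And>i. \<bar>i\<bar> \<le> int k \<Longrightarrow> c i = c' i"
  shows "cantor_dist c c' \<le> (1/2) ^ (k + 1)"
proof (cases "c = c'")
  case False
  let ?L = "LEAST k::nat. \<exists>i. \<bar>i\<bar> = int k \<and> c i \<noteq> c' i"
  from False obtain i where "c i \<noteq> c' i" by auto
  then have "\<exists>k i. \<bar>i\<bar> = int k \<and> c i \<noteq> c' i" by (intro exI[of _ "nat \<bar>i\<bar>"]) auto
  then have "\<exists>i. \<bar>i\<bar> = int ?L \<and> c i \<noteq> c' i" by (rule LeastI_ex)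
  then have "k + 1 \<le> ?L" using assms by force
  then have "(1/2::real) ^ ?L \<le> (1/2) ^ (k + 1)" by (intro power_decreasing) auto
  then show ?thesis using False by (simp add: cantor_dist_def)
qed (simp add: cantor_dist_def)

lemma agree_if_cantor_dist_less:
  assumes "cantor_dist c c' < (1/2) ^ k" and "\<bar>i\<bar> \<le> int k"
  shows "c i = c' i"
proof (rule ccontr)
  assume differ: "c i \<noteq> c' i"
  let ?L = "LEAST k::nat. \<exists>i. \<bar>i\<bar> = int k \<and> c i \<noteq> c' i"
  have "?L \<le> nat \<bar>i\<bar>" by (rule Least_le) (use differ in auto)
  then have "(1/2::real) ^ k \<le> (1/2) ^ ?L" using assms(2) by (intro power_decreasing) auto
  moreover have "c \<noteq> c'" using differ by auto
  ultimately show False using assms(1) by (simp add: cantor_dist_def)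
qed

lemma not_sensitive_determines:
  assumes "\<not> sensitive r \<delta>"
  obtains c k where "r \<le> k" "determines r \<delta> c {- int k..int k} {- int r..int r}"
proof -
  obtain c \<eta> where "\<eta> > 0" and stable: "\<And>c' n. cantor_dist c c' < \<eta> \<Longrightarrow>
      cantor_dist ((ca_global r \<delta> ^^ n) c) ((ca_global r \<delta> ^^ n) c') < (1/2) ^ r"
    using assms unfolding sensitive_def by (metis not_le zero_less_power zero_less_divide_1_iff zero_less_numeral)
  obtain k where "r \<le> k" and k: "(1/2::real) ^ (k + 1) < \<eta>"
  proof -
    obtain m where m: "(1/2::real) ^ m < \<eta>" using real_arch_pow_inv[OF \<open>\<eta> > 0\<close>, of "1/2"] by auto
    have "(1/2::real) ^ (max r m + 1) \<le> (1/2) ^ m" by (intro power_decreasing) auto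
    with m show ?thesis using that[of "max r m"] by simp
  qed
  have "determines r \<delta> c {- int k..int k} {- int r..int r}"
    unfolding determines_def
  proof (intro allI impI ballI)
    fix c' n i assume "\<forall>i\<in>{- int k..int k}. c' i = c i" and "i \<in> {- int r..int r}"
    then have "cantor_dist c c' < \<eta>"
      using cantor_dist_le_if_agree[of k c c'] k by (force simp: abs_le_iff)
    from agree_if_cantor_dist_less[OF stable[OF this]] \<open>i \<in> {- int r..int r}\<close>
    show "(ca_global r \<delta> ^^ n) c' i = (ca_global r \<delta> ^^ n) c i"
      by (simp add: abs_le_iff)
  qed
  with \<open>r \<le> k\<close> show ?thesis by (rule that)
qed

lemma not_sensitive_blocking_word:
  assumes "\<not> sensitive r \<delta>"
  obtains b where "blocking_word r \<delta> b"
proof -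
  obtain c k where "r \<le> k" and det: "determines r \<delta> c {- int k..int k} {- int r..int r}"
    using not_sensitive_determines[OF assms] .
  define b where "b = window c (- int k) (2 * k + 1)"
  have "determines r \<delta> x {0..<int (length b)} {int (k - r)..<int (k - r) + int r}"
    if "x \<in> cyl b 0" for x
  proof -
    have "(\<lambda>i. x (i + int k)) \<in> cyl b (- int k)" using that by (simp add: cyl_shift)
    then have "\<forall>i\<in>{- int k..<int k + 1}. x (i + int k) = c i"
      by (simp add: b_def cyl_window_iff algebra_simps)
    then have "determines r \<delta> (\<lambda>i. x (i + int k)) {- int k..int k} {- int r..int r}"
      by (intro determines_agreeing[OF det]) auto
    then have "determines r \<delta> x ((+) (int k) ` {- int k..int k}) ((+) (int k) ` {- int r..int r})"
      by (rule determines_shift)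
    then show ?thesis
      by (rule determines_mono) (use \<open>r \<le> k\<close> in \<open>auto simp: b_def\<close>)
  qed
  moreover have "k - r + r \<le> length b" using \<open>r \<le> k\<close> by (simp add: b_def)
  ultimately show ?thesis
    using that unfolding blocking_word_def by blast
qed

section \<open>Persistent words and bricks of walls\<close>

lemma not_tendsto_zero_iff_frequently_ge:
  fixes f :: "nat \<Rightarrow> real"
  assumes "\<And>n. 0 \<le> f n"
  shows "\<not> f \<longlonglongrightarrow> 0 \<longleftrightarrow> (\<exists>\<epsilon>>0. \<exists>\<^sub>F n in sequentially. \<epsilon> \<le> f n)"
proof -
  have "\<forall>l<0. \<forall>\<^sub>F n in sequentially. l < f n"
    using assms by (auto intro: always_eventually less_le_trans)
  then show ?thesis
    by (auto simp: order_tendsto_iff not_eventually not_less)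
qed

lemma persistent_iff_frequently:
  "persistent r \<delta> p u \<longleftrightarrow> (\<exists>\<epsilon>>0. \<exists>\<^sub>F n in sequentially. \<epsilon> \<le> push_cyl r \<delta> p n u)"
  unfolding persistent_def
  by (rule not_tendsto_zero_iff_frequently_ge) (simp add: push_cyl_def)

lemma cyl_foot_subset_preimage:
  assumes "is_wall r \<delta> w" and "1 \<le> n"
  shows "cyl (w 0) (centered_start (length (w 0)) - centered_start (length (w n)))
    \<subseteq> (ca_global r \<delta> ^^ n) -` cyl (w n) 0"
proof
  fix x
  define e where "e = centered_start (length (w n))"
  assume "x \<in> cyl (w 0) (centered_start (length (w 0)) - centered_start (length (w n)))"
  then have "(\<lambda>i. x (i + - e)) \<in> centered_cyl (w 0)"
    unfolding centered_cyl_eq cyl_shift e_def by simp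
  with assms have "(ca_global r \<delta> ^^ n) (\<lambda>i. x (i + - e)) \<in> cyl (w n) e"
    unfolding is_wall_def centered_cyl_eq e_def by blast
  then have "(ca_global r \<delta> ^^ n) x \<in> cyl (w n) (e + - e)"
    by (simp only: funpow_ca_global_shift cyl_shift)
  then show "x \<in> (ca_global r \<delta> ^^ n) -` cyl (w n) 0" by simp
qed

lemma brick_nonempty: "v \<in> bricks_of_walls r \<delta> \<Longrightarrow> v \<noteq> []"
  unfolding bricks_of_walls_def is_brick_def is_wall_def by force

lemma persistent_if_brick:
  fixes \<delta> :: "'q::finite list \<Rightarrow> 'q"
  assumes "complete_bernoulli p" and "v \<in> bricks_of_walls r \<delta>"
  shows "persistent r \<delta> p v"
proof -
  interpret prob_space "bernoulli p" by (rule prob_space_bernoulli)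
  obtain w P n0 where wall: "is_wall r \<delta> w" and "P \<ge> 1" and brick: "\<And>j. w (P * j + n0) = v"
    using assms(2) unfolding bricks_of_walls_def is_brick_def by blast
  define C where "C = cyl (w 0) (centered_start (length (w 0)) - centered_start (length v))"
  have "prob C \<le> push_cyl r \<delta> p (P * Suc j + n0) v" for j
  proof -
    have "C \<subseteq> (ca_global r \<delta> ^^ (P * Suc j + n0)) -` cyl v 0"
      using cyl_foot_subset_preimage[OF wall, of "P * Suc j + n0"] \<open>P \<ge> 1\<close> brick[of "Suc j"] by (simp add: C_def)
    then show ?thesis
      unfolding push_cyl_def by (intro finite_measure_mono preimage_cyl_in_sets)
  qed
  moreover have "N \<le> P * Suc N + n0" for N
    using \<open>P \<ge> 1\<close> by (metis le_add1 le_trans mult_le_mono1 mult_1 Suc_leD)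
  ultimately have "\<exists>\<^sub>F n in sequentially. prob C \<le> push_cyl r \<delta> p n v"
    unfolding frequently_sequentially by blast
  moreover have "prob C > 0"
    unfolding C_def by (rule measure_cyl_pos[OF assms(1)])
  ultimately show ?thesis
    unfolding persistent_iff_frequently by blast
qed

lemma is_wall_of_determining_window:
  fixes y :: "int \<Rightarrow> 'q" and L l :: nat
  defines "a \<equiv> centered_start L" and "b \<equiv> centered_start l"
  assumes det: "determines r \<delta> y {a..<a + int L} {b..<b + int l}" and "0 < l" "l \<le> L"
  shows "is_wall r \<delta> (\<lambda>n. if n = 0 then window y a L else window ((ca_global r \<delta> ^^ n) y) b l)"
  unfolding is_wall_def
proof (intro conjI allI ballI impI)
  fix c and n :: nat assume "c \<in> centered_cyl (if 0 = 0 then window y a L else window ((ca_global r \<delta> ^^ 0) y) b l)"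
    and "1 \<le> n"
  then have "\<forall>i\<in>{a..<a + int L}. c i = y i"
    by (simp add: centered_cyl_eq cyl_window_iff a_def)
  then have "\<forall>j\<in>{b..<b + int l}. (ca_global r \<delta> ^^ n) c j = (ca_global r \<delta> ^^ n) y j"
    by (blast intro: determinesD[OF det])
  with \<open>1 \<le> n\<close> show "(ca_global r \<delta> ^^ n) c \<in> centered_cyl (if n = 0 then window y a L else window ((ca_global r \<delta> ^^ n) y) b l)"
    by (simp add: centered_cyl_eq cyl_window_iff b_def)
qed (use assms in auto)

lemma brick_if_periodic_determining:
  fixes \<delta> :: "'q::finite list \<Rightarrow> 'q" and y :: "int \<Rightarrow> 'q" and u :: "'q list" and L :: nat
  defines "F \<equiv> {x :: int \<Rightarrow> 'q. \<forall>i. x (i + int L) = x i}"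
    and "a \<equiv> centered_start L" and "b \<equiv> centered_start (length u)"
  assumes "y \<in> F" and det: "determines r \<delta> y {a..<a + int L} {b..<b + int (length u)}"
    and "u \<noteq> []" and "length u \<le> L" and n: "max (card F) 1 \<le> n" and y_u: "(ca_global r \<delta> ^^ n) y \<in> cyl u b"
  shows "u \<in> bricks_of_walls r \<delta>"
proof -
  have "0 < length u" using \<open>u \<noteq> []\<close> by simp
  have "finite F"
    unfolding F_def by (rule finite_periodic_configurations) (use \<open>0 < length u\<close> \<open>length u \<le> L\<close> in linarith)
  have F_closed: "ca_global r \<delta> x \<in> F" if "x \<in> F" for x
    using that by (simp add: F_def ca_global_periodic)
  obtain P where "P \<ge> 1"
    and P: "\<And>m j. card F \<le> m \<Longrightarrow> (ca_global r \<delta> ^^ (m + P * j)) y = (ca_global r \<delta> ^^ m) y"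
    using funpow_eventually_periodic[of F "ca_global r \<delta>" y, OF \<open>finite F\<close> F_closed \<open>y \<in> F\<close>] by blast
  define w where "w m = (if m = 0 then window y a L else window ((ca_global r \<delta> ^^ m) y) b (length u))" for m
  have "is_wall r \<delta> w"
    unfolding w_def[abs_def] a_def b_def
    by (rule is_wall_of_determining_window) (use det \<open>0 < length u\<close> \<open>length u \<le> L\<close> in \<open>simp_all add: a_def b_def\<close>)
  moreover have "w (P * j + n) = u" for j
    using n P[of n j] y_u by (simp add: w_def window_eq_iff_cyl add.commute)
  with \<open>P \<ge> 1\<close> have "is_brick w u"
    unfolding is_brick_def by blast
  ultimately show ?thesis
    unfolding bricks_of_walls_def by blast
qed

lemma brick_if_frequently_determined:
  fixes \<delta> :: "'q::finite list \<Rightarrow> 'q"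
  assumes "u \<noteq> []"
    and often: "\<exists>\<^sub>F n in sequentially. \<exists>x. (ca_global r \<delta> ^^ n) x \<in> cyl u 0 \<and>
      determines r \<delta> x {- R..R} {0..<int (length u)}"
  shows "u \<in> bricks_of_walls r \<delta>"
proof -
  define l where "l = length u"
  define e where "e = centered_start l"
  \<comment> \<open>\<open>[-K, K)\<close> contains the determining cells \<open>[e - R, e + R]\<close> after the shift, and \<open>l \<le> 2K\<close>\<close>
  define K where "K = nat (\<bar>R\<bar> + \<bar>e\<bar> + int l + 1)"
  obtain n x where n: "max (card {x :: int \<Rightarrow> 'q. \<forall>i. x (i + int (2 * K)) = x i}) 1 \<le> n"
    and x_u: "(ca_global r \<delta> ^^ n) x \<in> cyl u 0" and det_x: "determines r \<delta> x {- R..R} {0..<int l}"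
    using often[unfolded frequently_sequentially, rule_format] l_def by blast
  define z where "z i = x (i - e)" for i
  from det_x have "determines r \<delta> (\<lambda>i. z (i + e)) {- R..R} {0..<int l}"
    by (simp add: z_def)
  then have "determines r \<delta> z ((+) e ` {- R..R}) ((+) e ` {0..<int l})"
    by (rule determines_shift)
  then have det_z: "determines r \<delta> z {- int K..<- int K + int (2 * K)} {e..<e + int l}"
    by (rule determines_mono) (auto simp: K_def)
  have "0 < int (2 * K)" by (simp add: K_def)
  then obtain y where y_periodic: "\<And>i. y (i + int (2 * K)) = y i"
    and y_z: "\<And>i. i \<in> {- int K..<- int K + int (2 * K)} \<Longrightarrow> y i = z i"
    using periodic_extension[of _ "- int K" z] by blast
  have "z = (\<lambda>i. x (i + - e))" by (simp add: z_def[abs_def])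
  then have "(ca_global r \<delta> ^^ n) z \<in> cyl u e \<longleftrightarrow> (ca_global r \<delta> ^^ n) x \<in> cyl u (e + - e)"
    by (simp only: funpow_ca_global_shift cyl_shift)
  with x_u have "(ca_global r \<delta> ^^ n) z \<in> cyl u e" by simp
  moreover have "(ca_global r \<delta> ^^ n) y j = (ca_global r \<delta> ^^ n) z j" if "j \<in> {e..<e + int l}" for j
    using that by (intro determinesD[OF det_z y_z])
  ultimately have "(ca_global r \<delta> ^^ n) y \<in> cyl u e"
    by (simp add: cyl_def l_def)
  moreover have "determines r \<delta> y {- int K..<- int K + int (2 * K)} {e..<e + int l}"
    using determines_agreeing[OF det_z y_z] .
  ultimately show ?thesis
    using brick_if_periodic_determining[of y "2 * K" r \<delta> u n] y_periodic n \<open>u \<noteq> []\<close>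
    by (simp add: centered_start_even e_def l_def K_def)
qed

lemma brick_if_persistent:
  fixes \<delta> :: "'q::finite list \<Rightarrow> 'q"
  assumes "\<not> sensitive r \<delta>" and "complete_bernoulli p" and "u \<noteq> []" and "persistent r \<delta> p u"
  shows "u \<in> bricks_of_walls r \<delta>"
proof -
  obtain \<epsilon> where "\<epsilon> > 0" and often: "\<exists>\<^sub>F n in sequentially. \<epsilon> \<le> push_cyl r \<delta> p n u"
    using assms(4) unfolding persistent_iff_frequently by blast
  obtain b where blocking: "blocking_word r \<delta> b"
    using not_sensitive_blocking_word[OF assms(1)] .
  obtain R where occurrences: "\<And>S. \<epsilon> \<le> measure (bernoulli p) S \<Longrightarrow>
    \<exists>x\<in>S. \<exists>tL tR. x \<in> cyl b tL \<and> x \<in> cyl b tR \<and> - R \<le> tL \<and> tL + int (length b) \<le> 0 \<and>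
      int (length u) \<le> tR \<and> tR + int (length b) \<le> R"
    using occurrences_on_both_sides[OF measure_cyl_pos[OF assms(2)] \<open>\<epsilon> > 0\<close>] by blast
  have "\<exists>x. (ca_global r \<delta> ^^ n) x \<in> cyl u 0 \<and> determines r \<delta> x {- R..R} {0..<int (length u)}"
    if large: "\<epsilon> \<le> push_cyl r \<delta> p n u" for n
  proof -
    obtain x tL tR where "(ca_global r \<delta> ^^ n) x \<in> cyl u 0" and "x \<in> cyl b tL" "x \<in> cyl b tR"
      and bounds: "- R \<le> tL" "tL + int (length b) \<le> 0" "int (length u) \<le> tR" "tR + int (length b) \<le> R"
      using occurrences[OF large[unfolded push_cyl_def]] by blast
    moreover have "determines r \<delta> x {tL..<tR + int (length b)} {tL + int (length b)..<tR}"
      using bounds by (intro determines_between_blocking_words[OF blocking]) (use calculation in auto)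
    then have "determines r \<delta> x {- R..R} {0..<int (length u)}"
      by (rule determines_mono) (use bounds in auto)
    ultimately show ?thesis by blast
  qed
  with often have "\<exists>\<^sub>F n in sequentially. \<exists>x. (ca_global r \<delta> ^^ n) x \<in> cyl u 0 \<and>
      determines r \<delta> x {- R..R} {0..<int (length u)}"
    by (auto elim: frequently_elim1)
  then show ?thesis
    by (rule brick_if_frequently_determined[OF assms(3)])
qed

theorem mainTheorem1:
  fixes r :: nat and \<delta> :: "('q::finite) list \<Rightarrow> 'q" and p :: "'q pmf"
  assumes "\<not> sensitive r \<delta>"
    and "complete_bernoulli p"
  shows "{u \<in> persistent_words r \<delta> p. u \<noteq> []} = bricks_of_walls r \<delta>"
  using brick_if_persistent[OF assms] persistent_if_brick[OF assms(2)] brick_nonempty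
  unfolding persistent_words_def by blast

end
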